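(* There exists a complete bifurcate tree of doubly infinite words over an alphabet of size $12$.
   Context: A doubly infinite word over $\mathcal{A}$ is a sequence $(w_k)_{k\in\mathbb{Z}}$ of letters of $\mathcal{A}$. It is square-free if none of its finite contiguous factors is a square, a square being a nonempty word of the form $XX$. A position of a doubly infinite word is a gap between two consecutive letters $w_k,w_{k+1}$; an extension at that position is the doubly infinite word obtained by inserting a single letter $\mathtt{x}\in\mathcal{A}$ between $w_k$ and $w_{k+1}$. A square-free doubly infinite word is bifurcate over $\mathcal{A}$ if at every position it has a square-free extension. A complete bifurcate tree of doubly infinite words is a family of bifurcate doubly infinite words arranged as a rooted tree in which the children of each word are single-letter extensions at pairwise different positions, and every word has a child extended at each of its positions. *)

theory Defs
  imports Main
begin

definition word_over :: "'a set \<Rightarrow> (int \<Rightarrow> 'a) \<Rightarrow> bool" where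
  "word_over A w \<longleftrightarrow> (\<forall>k. w k \<in> A)"

definition square_free :: "(int \<Rightarrow> 'a) \<Rightarrow> bool" where
  "square_free w \<longleftrightarrow>
     \<not> (\<exists>i (n::nat). n > 0 \<and> (\<forall>j<n. w (i + int j) = w (i + int n + int j)))"

text \<open>Position k is the gap between w k and w (k+1); insert letter x there.
  The new letter gets index k+1 and the letters to the right are shifted by one.\<close>
definition extend :: "(int \<Rightarrow> 'a) \<Rightarrow> int \<Rightarrow> 'a \<Rightarrow> (int \<Rightarrow> 'a)" where
  "extend w k x = (\<lambda>i. if i \<le> k then w i else if i = k + 1 then x else w (i - 1))"

definition bifurcate :: "'a set \<Rightarrow> (int \<Rightarrow> 'a) \<Rightarrow> bool" where
  "bifurcate A w \<longleftrightarrow> word_over A w \<and> square_free w \<and>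
     (\<forall>k. \<exists>x\<in>A. square_free (extend w k x))"

text \<open>A complete bifurcate tree: nodes are finite lists of positions (the root is []);
  the child of node ps at position p is node (p # ps), which is an extension of the
  word at ps at position p by some letter of A. Thus children are at pairwise
  different positions and every position has a child.\<close>
definition complete_bifurcate_tree :: "'a set \<Rightarrow> (int list \<Rightarrow> (int \<Rightarrow> 'a)) \<Rightarrow> bool" where
  "complete_bifurcate_tree A T \<longleftrightarrow>
     (\<forall>ps. bifurcate A (T ps)) \<and>
     (\<forall>ps p. \<exists>x\<in>A. T (p # ps) = extend (T ps) p x)"

end

theory Submission
  imports Defs
begin

text \<open>Every letter of a word in the tree is a vertex recording how it was created: the letters of
  the root word are \<open>Root i\<close>, and a letter inserted between \<open>u\<close> and \<open>v\<close> is \<open>Ear u v\<close>, whose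
  level is one more than the smaller level of \<open>u\<close> and \<open>v\<close>. In every word, adjacent levels differ
  by at most one, and indices increase by one between successive letters of equal level separated
  only by higher levels. A letter is coloured by a square-free word over four letters, taken at its
  level, and by a square-free ternary word, taken at its index: twelve colours. If a coloured word
  contained a square, its level sequence would be a walk with steps in \<open>{-1, 0, 1}\<close> mapped to a
  square by a square-free word whose letters at distance at most two differ; such a walk must
  itself be periodic. The letters of minimal level in the square then carry consecutive indices,
  which yields a square in the ternary word. So every word of the tree is square-free, and all its
  children are square-free extensions, one at each position.\<close>

section \<open>The Thue--Morse word\<close>

fun thue_morse :: "nat \<Rightarrow> bool" where
  "thue_morse n =
     (if n = 0 then False else if even n then thue_morse (n div 2) else \<not> thue_morse (n div 2))"

declare thue_morse.simps [simp del]

lemma thue_morse_0 [simp]: "\<not> thue_morse 0"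
  by (simp add: thue_morse.simps)

lemma thue_morse_double [simp]: "thue_morse (2 * n) = thue_morse n"
  by (cases "n = 0") (simp_all add: thue_morse.simps [of "2 * n"])

lemma thue_morse_Suc_double [simp]: "thue_morse (Suc (2 * n)) = (\<not> thue_morse n)"
  by (simp add: thue_morse.simps [of "Suc (2 * n)"])

lemma thue_morse_Suc_even: "even x \<Longrightarrow> thue_morse (Suc x) \<noteq> thue_morse x"
  by (auto elim: evenE)

lemma thue_morse_split:
  "r < 2 ^ l \<Longrightarrow> thue_morse (2 ^ l * a + r) = (thue_morse a \<noteq> thue_morse r)"
proof (induction l arbitrary: r)
  case 0
  then show ?case by simp
next
  case (Suc l)
  then have r: "r div 2 < 2 ^ l"
    by simp
  show ?case
  proof (cases "even r")
    case True
    then have "2 ^ Suc l * a + r = 2 * (2 ^ l * a + r div 2)" and "r = 2 * (r div 2)"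
      by simp_all
    then show ?thesis
      using Suc.IH [OF r] by (metis thue_morse_double)
  next
    case False
    then have "2 ^ Suc l * a + r = Suc (2 * (2 ^ l * a + r div 2))" and "r = Suc (2 * (r div 2))"
      using odd_two_times_div_two_succ [of r] by simp_all
    then show ?thesis
      using Suc.IH [OF r] by (metis thue_morse_Suc_double)
  qed
qed

lemma thue_morse_no_cube:
  "\<not> (thue_morse m = thue_morse (m + 1) \<and> thue_morse (m + 1) = thue_morse (m + 2))"
proof (cases "even m")
  case True
  then obtain a where "m = 2 * a" by (elim evenE)
  then show ?thesis by simp
next
  case False
  then obtain a where "m = Suc (2 * a)" by (elim oddE) simp
  then have "m + 1 = 2 * (a + 1)" and "m + 2 = Suc (2 * (a + 1))" by simp_all
  then show ?thesis by (simp only: thue_morse_double thue_morse_Suc_double) simp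
qed

definition overlap_at :: "(nat \<Rightarrow> 'b) \<Rightarrow> nat \<Rightarrow> nat \<Rightarrow> bool" where
  "overlap_at f p q \<longleftrightarrow> q > 0 \<and> (\<forall>j\<le>q. f (p + j) = f (p + q + j))"

lemma thue_morse_overlap_halve:
  assumes "overlap_at thue_morse p (2 * r)"
  shows "overlap_at thue_morse (p div 2) r"
  unfolding overlap_at_def
proof (intro conjI allI impI)
  have eq: "\<And>j. j \<le> 2 * r \<Longrightarrow> thue_morse (p + j) = thue_morse (p + 2 * r + j)"
    using assms by (simp add: overlap_at_def)
  show "r > 0"
    using assms by (simp add: overlap_at_def)
  fix i assume i: "i \<le> r"
  show "thue_morse (p div 2 + i) = thue_morse (p div 2 + r + i)"
  proof (cases "even p")
    case True
    then obtain a where p: "p = 2 * a" by (elim evenE)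
    have "thue_morse (2 * (a + i)) = thue_morse (2 * (a + r + i))"
      using eq [of "2 * i"] i p by (simp add: algebra_simps)
    then show ?thesis
      using p by (simp only: thue_morse_double) simp
  next
    case False
    then obtain a where p: "p = Suc (2 * a)" by (elim oddE) simp
    show ?thesis
    proof (cases "i = 0")
      case True
      have "thue_morse (Suc (2 * a)) = thue_morse (Suc (2 * (a + r)))"
        using eq [of 0] p by (simp add: algebra_simps)
      then show ?thesis
        using p True by (simp only: thue_morse_Suc_double) simp
    next
      case False
      then have "p + (2 * i - 1) = 2 * (a + i)" and "p + 2 * r + (2 * i - 1) = 2 * (a + r + i)"
        using p by simp_all
      moreover have "2 * i - 1 \<le> 2 * r"
        using i by simp
      ultimately have "thue_morse (2 * (a + i)) = thue_morse (2 * (a + r + i))"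
        using eq by metis
      then show ?thesis
        using p by (simp only: thue_morse_double) simp
    qed
  qed
qed

text \<open>Inside an overlap of odd period, every letter at an odd position differs from its successor,
  because it is a copy, at distance \<open>q\<close>, of a letter at an even position.\<close>

lemma thue_morse_overlap_odd_alternates:
  assumes "overlap_at thue_morse p q" "odd q" "p \<le> y" "y < p + 2 * q"
  shows "thue_morse (Suc y) \<noteq> thue_morse y"
proof (cases "even y")
  case True
  then show ?thesis by (rule thue_morse_Suc_even)
next
  case False
  have eq: "\<And>j. j \<le> q \<Longrightarrow> thue_morse (p + j) = thue_morse (p + q + j)"
    using assms(1) by (simp add: overlap_at_def)
  show ?thesis
  proof (cases "y < p + q")
    case True
    have "thue_morse y = thue_morse (y + q)" "thue_morse (Suc y) = thue_morse (Suc y + q)"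
      using eq [of "y - p"] eq [of "Suc y - p"] assms(3) True by (simp_all add: algebra_simps)
    moreover have "even (y + q)"
      using False assms(2) by simp
    ultimately show ?thesis
      using thue_morse_Suc_even [of "y + q"] by simp
  next
    case False
    have "thue_morse (y - q) = thue_morse y" "thue_morse (Suc (y - q)) = thue_morse (Suc y)"
      using eq [of "y - q - p"] eq [of "Suc (y - q) - p"] assms(3,4) False
      by (simp_all add: algebra_simps Suc_diff_le)
    moreover have "even (y - q)"
      using \<open>odd y\<close> assms(2) False by simp
    ultimately show ?thesis
      using thue_morse_Suc_even [of "y - q"] by simp
  qed
qed

lemma thue_morse_no_alternation:
  assumes "\<And>y. p \<le> y \<Longrightarrow> y < p + 5 \<Longrightarrow> thue_morse (Suc y) \<noteq> thue_morse y"
  shows False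
proof -
  define a where "a = Suc p div 2"
  have a: "p \<le> 2 * a" "2 * a \<le> p + 1"
    unfolding a_def by presburger+
  have "thue_morse (2 * (a + 1)) \<noteq> thue_morse (Suc (2 * a))"
    "thue_morse (2 * (a + 2)) \<noteq> thue_morse (Suc (2 * (a + 1)))"
    using assms [of "Suc (2 * a)"] assms [of "Suc (2 * (a + 1))"] a by simp_all
  then show False
    using thue_morse_no_cube [of a] by (simp only: thue_morse_double thue_morse_Suc_double) auto
qed

theorem thue_morse_overlap_free: "\<not> overlap_at thue_morse p q"
proof (induction q arbitrary: p rule: less_induct)
  case (less q)
  show ?case
  proof
    assume ov: "overlap_at thue_morse p q"
    then have "q > 0" by (simp add: overlap_at_def)
    consider "even q" | "q = 1" | "odd q" "q \<ge> 3"
      using \<open>q > 0\<close> by (cases "q \<ge> 3") (auto simp: not_le less_Suc_eq numeral_3_eq_3)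
    then show False
    proof cases
      case 1
      then obtain r where "q = 2 * r" by (elim evenE)
      then show False
        using ov less.IH [of r] thue_morse_overlap_halve \<open>q > 0\<close> by fastforce
    next
      case 2
      then show False
        using ov thue_morse_no_cube [of p] by (auto simp: overlap_at_def dest: spec [of _ 0] spec [of _ 1])
    next
      case 3
      then show False
        using thue_morse_no_alternation thue_morse_overlap_odd_alternates [OF ov] by force
    qed
  qed
qed

section \<open>A square-free word over four letters\<close>

lemma thue_morse_no_overlap_2:
  "\<not> (thue_morse m = thue_morse (m + 2) \<and> thue_morse (m + 1) = thue_morse (m + 3)
      \<and> thue_morse (m + 2) = thue_morse (m + 4))"
  using thue_morse_overlap_free [of m 2]
  by (auto simp: overlap_at_def le_Suc_eq numeral_eq_Suc)

lemma thue_morse_eq_next_imp_odd: "thue_morse (m + 1) = thue_morse m \<Longrightarrow> odd m"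
  using thue_morse_Suc_even by auto

lemma thue_morse_outer_neq:
  assumes "thue_morse (n + 1) = thue_morse (n + 3)"
  shows "thue_morse n \<noteq> thue_morse (n + 4)"
proof
  assume eq: "thue_morse n = thue_morse (n + 4)"
  have mid: "thue_morse (n + 2) \<noteq> thue_morse (n + 1)"
    using thue_morse_no_cube [of "n + 1"] assms by (auto simp: eval_nat_numeral)
  then show False
  proof (cases "thue_morse n = thue_morse (n + 1)")
    case True
    then have "odd n" "odd (n + 3)"
      using thue_morse_eq_next_imp_odd [of n] thue_morse_eq_next_imp_odd [of "n + 3"] eq assms
      by (simp_all add: add.commute)
    then show False by simp
  next
    case False
    then show False
      using thue_morse_no_overlap_2 [of n] eq assms mid by auto
  qed
qed

definition nat_square_free :: "(nat \<Rightarrow> 'b) \<Rightarrow> bool" where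
  "nat_square_free c \<longleftrightarrow> \<not> (\<exists>a q. q > 0 \<and> (\<forall>j<q. c (a + j) = c (a + q + j)))"

text \<open>\<open>quad_word n\<close> records \<open>thue_morse (n + 1)\<close>, or \<open>thue_morse n\<close> flagged when the factor at \<open>n\<close> reads
  \<open>x, \<not>x, _, x\<close>. Three consecutive letters determine four Thue--Morse letters, so a square
  lifts to an overlap, and letters at distance one or two differ.\<close>

definition quad_code :: "bool \<Rightarrow> bool \<Rightarrow> bool \<Rightarrow> bool \<times> bool" where
  "quad_code a b d = (if a = d \<and> a \<noteq> b then (True, a) else (False, b))"

definition quad_word :: "nat \<Rightarrow> bool \<times> bool" where
  "quad_word n = quad_code (thue_morse n) (thue_morse (n + 1)) (thue_morse (n + 3))"

lemma quad_code_eq_imp_middle: "quad_code a b d = quad_code a' b' d' \<Longrightarrow> b = b'"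
  by (auto simp: quad_code_def split: if_splits)

lemma quad_code_eq_imp_first: "b \<noteq> d \<Longrightarrow> quad_code a b d = quad_code a' b d \<Longrightarrow> a = a'"
  by (auto simp: quad_code_def split: if_splits)

lemma quad_code_eq_imp_last: "a \<noteq> b \<Longrightarrow> quad_code a b d = quad_code a b d' \<Longrightarrow> d = d'"
  by (auto simp: quad_code_def split: if_splits)

lemma quad_word_neq_next: "quad_word n \<noteq> quad_word (n + 1)"
  using thue_morse_no_cube [of n] thue_morse_no_cube [of "n + 1"]
  by (auto simp: quad_word_def quad_code_def eval_nat_numeral split: if_splits)

lemma quad_word_neq_next2: "quad_word n \<noteq> quad_word (n + 2)"
  using thue_morse_no_cube [of "n + 1"] thue_morse_no_cube [of "n + 3"]
    thue_morse_no_overlap_2 [of "n + 1"]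
  by (auto simp: quad_word_def quad_code_def eval_nat_numeral split: if_splits)

lemma quad_word_eq_near:
  assumes "quad_word a = quad_word b" "a \<le> b + 2" "b \<le> a + 2"
  shows "a = b"
proof (rule ccontr)
  assume "a \<noteq> b"
  then consider "b = a + 1" | "b = a + 2" | "a = b + 1" | "a = b + 2"
    using assms(2,3) by linarith
  then show False
    using assms(1) quad_word_neq_next [of a] quad_word_neq_next2 [of a]
      quad_word_neq_next [of b] quad_word_neq_next2 [of b] by cases auto
qed

lemma quad_word_determines_factor:
  assumes "quad_word n = quad_word n'" "quad_word (n + 1) = quad_word (n' + 1)"
    and "quad_word (n + 2) = quad_word (n' + 2)" and "j \<le> 3"
  shows "thue_morse (n + j) = thue_morse (n' + j)"
proof -
  have middle: "thue_morse (n + 1) = thue_morse (n' + 1)" "thue_morse (n + 2) = thue_morse (n' + 2)"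
    "thue_morse (n + 3) = thue_morse (n' + 3)"
    using assms(1-3) quad_code_eq_imp_middle by (auto simp: quad_word_def eval_nat_numeral)
  have "thue_morse n = thue_morse n'"
  proof (cases "thue_morse (n + 1) = thue_morse (n + 3)")
    case True
    then have "thue_morse (n + 1) \<noteq> thue_morse (n + 2)"
      using thue_morse_no_cube [of "n + 1"] by (auto simp: eval_nat_numeral)
    moreover have "quad_code (thue_morse (n + 1)) (thue_morse (n + 2)) (thue_morse (n + 4))
        = quad_code (thue_morse (n + 1)) (thue_morse (n + 2)) (thue_morse (n' + 4))"
      using assms(2) middle by (simp add: quad_word_def eval_nat_numeral)
    ultimately have "thue_morse (n + 4) = thue_morse (n' + 4)"
      by (rule quad_code_eq_imp_last)
    then show ?thesis
      using True middle thue_morse_outer_neq [of n] thue_morse_outer_neq [of n'] by auto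
  next
    case False
    moreover have "quad_code (thue_morse n) (thue_morse (n + 1)) (thue_morse (n + 3))
        = quad_code (thue_morse n') (thue_morse (n + 1)) (thue_morse (n + 3))"
      using assms(1) middle by (simp add: quad_word_def)
    ultimately show ?thesis
      by (rule quad_code_eq_imp_first)
  qed
  then show ?thesis
    using middle assms(4) by (auto simp: le_Suc_eq eval_nat_numeral)
qed

theorem quad_word_square_free: "nat_square_free quad_word"
  unfolding nat_square_free_def
proof clarify
  fix a q :: nat
  assume "q > 0" and eq: "\<forall>j<q. quad_word (a + j) = quad_word (a + q + j)"
  show False
  proof (cases "q \<le> 2")
    case True
    then have "q = 1 \<or> q = 2"
      using \<open>q > 0\<close> by auto
    then show False
      using eq [rule_format, of 0] quad_word_neq_next [of a] quad_word_neq_next2 [of a] by auto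
  next
    case False
    have "overlap_at thue_morse a q"
      unfolding overlap_at_def
    proof (intro conjI allI impI)
      fix j assume "j \<le> q"
      define k where "k = min j (q - 3)"
      have k: "k + 2 < q" "j - k \<le> 3"
        using False \<open>j \<le> q\<close> by (auto simp: k_def)
      have "quad_word (a + k) = quad_word (a + q + k)"
        "quad_word (a + k + 1) = quad_word (a + q + k + 1)"
        "quad_word (a + k + 2) = quad_word (a + q + k + 2)"
        using eq [rule_format, of k] eq [rule_format, of "k + 1"] eq [rule_format, of "k + 2"] k
        by (simp_all add: add.assoc)
      then have "thue_morse (a + k + (j - k)) = thue_morse (a + q + k + (j - k))"
        using k(2) by (rule quad_word_determines_factor)
      then show "thue_morse (a + j) = thue_morse (a + q + j)"
        by (simp add: k_def add.assoc)
    qed (use \<open>q > 0\<close> in simp)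
    then show False
      using thue_morse_overlap_free by blast
  qed
qed

section \<open>A two-sided square-free ternary word\<close>

lemma thue_morse_pow4_block:
  assumes "r < 4 ^ k"
  shows "thue_morse (4 ^ k * a + r) = (thue_morse a \<noteq> thue_morse r)"
  using thue_morse_split [of r "2 * k" a] assms by (simp add: power_mult)

lemma thue_morse_add_9_pow4:
  assumes "2 * 4 ^ k \<le> m" "m < 4 * 4 ^ k"
  shows "thue_morse (m + 9 * 4 ^ k) = thue_morse m"
proof -
  define a where "a = m div 4 ^ k"
  have "2 \<le> a" "a < 4"
    using assms unfolding a_def by (simp_all add: less_eq_div_iff_mult_less_eq div_less_iff_less_mult)
  then have "a = 2 \<or> a = 3"
    by auto
  moreover have "thue_morse 11 = thue_morse 2" "thue_morse 12 = thue_morse 3"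
    using thue_morse_Suc_double [of 5] thue_morse_Suc_double [of 2] thue_morse_double [of 6]
      thue_morse_double [of 3] by simp_all
  ultimately have "thue_morse (a + 9) = thue_morse a"
    by auto
  moreover have "m = 4 ^ k * a + m mod 4 ^ k" "m + 9 * 4 ^ k = 4 ^ k * (a + 9) + m mod 4 ^ k"
    unfolding a_def by (simp_all add: algebra_simps)
  ultimately show ?thesis
    using thue_morse_pow4_block [of "m mod 4 ^ k" k] by (metis mod_less_divisor zero_less_numeral zero_less_power)
qed

text \<open>By \<open>thue_morse_add_9_pow4\<close>, the Thue--Morse letters within distance \<open>4 ^ k\<close> of \<open>3 * 4 ^ k\<close>
  reappear around \<open>3 * 4 ^ (k + 1)\<close>; reading them from the centre gives a two-sided word.\<close>

definition thue_morse_int :: "int \<Rightarrow> bool" where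
  "thue_morse_int i = thue_morse (nat (3 * 4 ^ nat \<bar>i\<bar> + i))"

lemma thue_morse_centre_Suc:
  assumes "- (4 ^ k) \<le> i" "i < 4 ^ k"
  shows "thue_morse (nat (3 * 4 ^ Suc k + i)) = thue_morse (nat (3 * 4 ^ k + i))"
proof -
  have "nat (3 * 4 ^ Suc k + i) = nat (3 * 4 ^ k + i) + 9 * 4 ^ k"
    using assms by (auto simp: nat_eq_iff)
  moreover have "2 * 4 ^ k \<le> nat (3 * 4 ^ k + i)" "nat (3 * 4 ^ k + i) < 4 * 4 ^ k"
    using assms by (auto simp: le_nat_iff nat_less_iff)
  ultimately show ?thesis
    using thue_morse_add_9_pow4 by simp
qed

lemma thue_morse_centre_mono:
  assumes "- (4 ^ k) \<le> i" "i < 4 ^ k" "k \<le> l"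
  shows "thue_morse (nat (3 * 4 ^ l + i)) = thue_morse (nat (3 * 4 ^ k + i))"
  using assms(3)
proof (induction l rule: dec_induct)
  case (step l)
  have "(4::int) ^ k \<le> 4 ^ l"
    using step(1) by (simp add: power_increasing)
  then have "- (4 ^ l) \<le> i" "i < 4 ^ l"
    using assms(1,2) by linarith+
  then show ?case
    using step.IH thue_morse_centre_Suc [of l i] by simp
qed simp

lemma int_less_pow4: "int k < 4 ^ k"
proof -
  have "k < 4 ^ k"
    by (rule less_le_trans [OF less_exp power_mono]) simp_all
  then show ?thesis
    by (metis of_nat_less_iff of_nat_numeral of_nat_power)
qed

lemma thue_morse_int_eq:
  assumes "- (4 ^ k) \<le> i" "i < 4 ^ k"
  shows "thue_morse_int i = thue_morse (nat (3 * 4 ^ k + i))"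
proof -
  define k0 where "k0 = nat \<bar>i\<bar>"
  have "- (4 ^ k0) \<le> i" "i < 4 ^ k0"
    using int_less_pow4 [of k0] unfolding k0_def by auto
  then show ?thesis
    unfolding thue_morse_int_def k0_def [symmetric]
    using thue_morse_centre_mono assms by (cases "k0 \<le> k") (metis nat_le_linear)+
qed

lemma thue_morse_int_overlap_free:
  assumes "s > 0" "\<forall>j\<le>s. thue_morse_int (a + int j) = thue_morse_int (a + int s + int j)"
  shows False
proof -
  define k where "k = nat \<bar>a\<bar> + 2 * s"
  have range: "- (4 ^ k) \<le> a + int j \<and> a + int j < 4 ^ k" if "j \<le> 2 * s" for j
    using that int_less_pow4 [of k] unfolding k_def by auto
  define p where "p = nat (3 * 4 ^ k + a)"
  have tm: "thue_morse_int (a + int j) = thue_morse (p + j)" if "j \<le> 2 * s" for j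
  proof -
    have "nat (3 * 4 ^ k + (a + int j)) = p + j"
      using range [of 0] unfolding p_def by auto
    then show ?thesis
      using thue_morse_int_eq range that by metis
  qed
  have "overlap_at thue_morse p s"
    unfolding overlap_at_def
  proof (intro conjI allI impI)
    fix j assume "j \<le> s"
    then show "thue_morse (p + j) = thue_morse (p + s + j)"
      using assms(2) tm [of j] tm [of "s + j"] by (simp add: add.assoc)
  qed (rule assms(1))
  then show False
    using thue_morse_overlap_free by blast
qed

definition thue_morse_diff :: "int \<Rightarrow> int" where
  "thue_morse_diff i = of_bool (thue_morse_int (i + 1)) - of_bool (thue_morse_int i)"

lemma thue_morse_diff_range: "thue_morse_diff i \<in> {- 1, 0, 1}"
  by (simp add: thue_morse_diff_def)

text \<open>A square of period \<open>s\<close> in the differences makes \<open>thue_morse_int (a + s + j) - thue_morse_int (a + j)\<close>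
  constant on \<open>j \<le> s\<close>; a zero constant is an overlap, and a nonzero one cannot occur twice in a row
  for a \<open>0\<close>/\<open>1\<close>-valued word.\<close>

theorem thue_morse_diff_square_free: "square_free thue_morse_diff"
  unfolding square_free_def
proof clarify
  fix a :: int and s :: nat
  assume "s > 0" and sq: "\<forall>j<s. thue_morse_diff (a + int j) = thue_morse_diff (a + int s + int j)"
  define x where "x j = (of_bool (thue_morse_int (a + int j)) :: int)" for j
  have step: "x (s + j) - x j = x s - x 0" if "j \<le> s" for j
    using that
  proof (induction j)
    case (Suc j)
    then have "thue_morse_diff (a + int j) = thue_morse_diff (a + int s + int j)"
      using sq by simp
    then have "x (s + Suc j) - x (Suc j) = x (s + j) - x j"
      by (simp add: x_def thue_morse_diff_def algebra_simps)
    then show ?case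
      using Suc by simp
  qed simp
  have "x s - x 0 = 0"
    using step [of s] by (simp add: x_def of_bool_def split: if_splits)
  then have "x (s + j) = x j" if "j \<le> s" for j
    using step [OF that] by simp
  then have "\<forall>j\<le>s. thue_morse_int (a + int j) = thue_morse_int (a + int s + int j)"
    by (simp add: x_def add.assoc of_bool_eq_iff)
  then show False
    using thue_morse_int_overlap_free \<open>s > 0\<close> by blast
qed

section \<open>Lazy walks under square-free words\<close>

lemma int_near_half_between:
  fixes a b e :: int
  assumes "e - 1 \<le> a + b" "a + b \<le> e + 1" "2 * a \<noteq> e"
  shows "\<exists>y. min a b \<le> y \<and> y \<le> max a b \<and> 2 * y \<noteq> e \<and> \<bar>2 * y - e\<bar> \<le> 2"
  using assms by presburger

lemma lazy_walk_hits:
  fixes x :: "nat \<Rightarrow> int"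
  assumes "\<And>j. j < m \<Longrightarrow> \<bar>x (Suc j) - x j\<bar> \<le> 1"
    and "min (x 0) (x m) \<le> y" "y \<le> max (x 0) (x m)"
  shows "\<exists>j\<le>m. x j = y"
  using assms
proof (induction m)
  case (Suc m)
  show ?case
  proof (cases "min (x 0) (x m) \<le> y \<and> y \<le> max (x 0) (x m)")
    case True
    then show ?thesis
      using Suc by (meson le_SucI less_SucI)
  next
    case False
    then have "x (Suc m) = y"
      using Suc.prems(1) [of m] Suc.prems(2,3) by auto
    then show ?thesis
      by blast
  qed
qed auto

text \<open>The walk itself has period \<open>n\<close>: otherwise each step of the second half is \<open>\<rho>\<close> times the
  corresponding step of the first half for a fixed \<open>\<rho> = \<plusminus>1\<close>; a translation of the first half
  then exhibits a square in \<open>c\<close>, and a reflection brings a letter to within distance two of its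
  mirror image.\<close>

locale lazy_walk_square =
  fixes c :: "nat \<Rightarrow> 'b" and z :: "nat \<Rightarrow> nat" and n :: nat
  assumes square_free: "nat_square_free c"
    and separated: "\<And>a b. c a = c b \<Longrightarrow> a \<le> b + 2 \<Longrightarrow> b \<le> a + 2 \<Longrightarrow> a = b"
    and n_pos: "n > 0"
    and lazy: "\<And>j. Suc j < 2 * n \<Longrightarrow> z (Suc j) \<le> z j + 1 \<and> z j \<le> z (Suc j) + 1"
    and square: "\<And>j. j < n \<Longrightarrow> c (z j) = c (z (j + n))"
begin

definition step :: "nat \<Rightarrow> int" where
  "step j = int (z (Suc j)) - int (z j)"

lemma step_bound: "Suc j < 2 * n \<Longrightarrow> \<bar>step j\<bar> \<le> 1"
  using lazy [of j] by (auto simp: step_def)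

lemma eq_if_close: "c (z a) = c (z b) \<Longrightarrow> \<bar>int (z a) - int (z b)\<bar> \<le> 2 \<Longrightarrow> z a = z b"
  using separated [of "z a" "z b"] by linarith

lemma z_eq_if_steps_zero: "j \<le> k \<Longrightarrow> (\<And>i. j \<le> i \<Longrightarrow> i < k \<Longrightarrow> step i = 0) \<Longrightarrow> z k = z j"
proof (induction k rule: dec_induct)
  case (step k)
  then show ?case
    by (simp add: step_def)
qed simp

lemma periodic_if_start:
  assumes "z n = z 0" "j < n"
  shows "z (j + n) = z j"
  using assms(2)
proof (induction j)
  case (Suc j)
  have "\<bar>int (z (Suc j + n)) - int (z (Suc j))\<bar> \<le> 2"
    using Suc step_bound [of j] step_bound [of "j + n"] by (auto simp: step_def)
  then show ?case
    using eq_if_close square [OF Suc.prems] by (metis abs_minus_commute)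
qed (use assms(1) in simp)

lemma shift_eq_iff:
  assumes "a < n" "b < n" "\<bar>int (z a) - int (z b)\<bar> \<le> 2"
    and "\<bar>int (z (a + n)) - int (z (b + n))\<bar> \<le> 2"
  shows "z (a + n) = z (b + n) \<longleftrightarrow> z a = z b"
  using square [OF assms(1)] square [OF assms(2)] eq_if_close assms(3,4) by metis

lemma step_zero_iff:
  assumes "Suc j < n"
  shows "step (j + n) = 0 \<longleftrightarrow> step j = 0"
  using shift_eq_iff [of "Suc j" j] step_bound [of j] step_bound [of "j + n"] assms
  by (simp add: step_def)

text \<open>Between two consecutive nonzero steps the walk stays put, so the second step either
  returns to the start of the first or not; by \<open>shift_eq_iff\<close> the shifted walk does the same.\<close>

lemma consecutive_steps_orientation:
  assumes "j < k" "Suc k < n" "step j \<noteq> 0" "step k \<noteq> 0"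
    and zero: "\<And>i. j < i \<Longrightarrow> i < k \<Longrightarrow> step i = 0"
  shows "step (k + n) * step k = step (j + n) * step j"
proof -
  have "z k = z (Suc j)"
    using z_eq_if_steps_zero [of "Suc j" k] assms(1) zero by simp
  moreover have "step i = 0" if "Suc j + n \<le> i" "i < k + n" for i
  proof -
    have "step (i - n + n) = 0"
      using step_zero_iff [of "i - n"] zero [of "i - n"] that assms(2) by simp
    then show ?thesis
      using that by simp
  qed
  then have "z (k + n) = z (Suc j + n)"
    using z_eq_if_steps_zero [of "Suc j + n" "k + n"] assms(1) by simp
  ultimately have "z (Suc k + n) = z (j + n) \<longleftrightarrow> z (Suc k) = z j"
    using shift_eq_iff [of "Suc k" j] step_bound [of j] step_bound [of k] step_bound [of "j + n"]
      step_bound [of "k + n"] assms(1,2)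
    by (simp add: step_def)
  then have key: "step (k + n) = - step (j + n) \<longleftrightarrow> step k = - step j"
    using \<open>z k = z (Suc j)\<close> \<open>z (k + n) = z (Suc j + n)\<close> by (auto simp: step_def)
  have "step j \<in> {-1, 1}" "step k \<in> {-1, 1}" "step (j + n) \<in> {-1, 1}" "step (k + n) \<in> {-1, 1}"
    using step_bound [of j] step_bound [of k] step_bound [of "j + n"] step_bound [of "k + n"]
      step_zero_iff [of j] step_zero_iff [of k] assms(1-4) by auto
  then show ?thesis
    using key by auto
qed

lemma steps_orientation:
  assumes "j < k" "Suc k < n" "step j \<noteq> 0" "step k \<noteq> 0"
  shows "step (k + n) * step k = step (j + n) * step j"
  using assms
proof (induction k rule: less_induct)
  case (less k)
  define i where "i = Max {i. j \<le> i \<and> i < k \<and> step i \<noteq> 0}"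
  have "i \<in> {i. j \<le> i \<and> i < k \<and> step i \<noteq> 0}"
    unfolding i_def using less.prems by (intro Max_in) auto
  then have i: "j \<le> i" "i < k" "step i \<noteq> 0"
    by simp_all
  have "step l = 0" if "i < l" "l < k" for l
    using that i Max_ge [of "{i. j \<le> i \<and> i < k \<and> step i \<noteq> 0}" l] unfolding i_def
    by (metis (mono_tags, lifting) finite_nat_set_iff_bounded le_trans less_imp_le mem_Collect_eq
        not_le)
  then have "step (k + n) * step k = step (i + n) * step i"
    using consecutive_steps_orientation i less.prems by blast
  moreover have "step (i + n) * step i = step (j + n) * step j"
    using less.IH [of i] i less.prems by (cases "i = j") auto
  ultimately show ?case
    by simp
qed

lemma orientation:
  obtains \<rho> :: int where "\<bar>\<rho>\<bar> = 1" "\<And>j. Suc j < n \<Longrightarrow> step (j + n) = \<rho> * step j"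
proof (cases "\<exists>j. Suc j < n \<and> step j \<noteq> 0")
  case False
  then show ?thesis
    using that [of 1] step_zero_iff by auto
next
  case True
  then obtain j0 where j0: "Suc j0 < n" "step j0 \<noteq> 0"
    by blast
  have unit: "step j \<in> {-1, 1}" "step (j + n) \<in> {-1, 1}" if "Suc j < n" "step j \<noteq> 0" for j
    using step_bound [of j] step_bound [of "j + n"] step_zero_iff [of j] that by auto
  define \<rho> where "\<rho> = step (j0 + n) * step j0"
  have \<rho>: "\<rho> \<in> {-1, 1}"
    using unit [OF j0] by (auto simp: \<rho>_def)
  show ?thesis
  proof (rule that)
    show "\<bar>\<rho>\<bar> = 1"
      using \<rho> by auto
    fix j assume j: "Suc j < n"
    show "step (j + n) = \<rho> * step j"
    proof (cases "step j = 0")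
      case False
      then have "step (j + n) * step j = \<rho>"
        using steps_orientation [of j j0] steps_orientation [of j0 j] j j0 unfolding \<rho>_def
        by (cases j j0 rule: linorder_cases) auto
      then show ?thesis
        using unit [OF j False] \<rho> by auto
    qed (use step_zero_iff j in simp)
  qed
qed

lemma shifted_walk:
  assumes "\<And>j. Suc j < n \<Longrightarrow> step (j + n) = \<rho> * step j" "j < n"
  shows "int (z (j + n)) = int (z n) + \<rho> * (int (z j) - int (z 0))"
  using assms(2)
proof (induction j)
  case (Suc j)
  then show ?case
    using assms(1) [of j] by (simp add: step_def algebra_simps)
qed simp

lemma first_half_hits:
  assumes "min (int (z 0)) (int (z (n - 1))) \<le> y" "y \<le> max (int (z 0)) (int (z (n - 1)))"
  shows "\<exists>j<n. int (z j) = y"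
proof -
  obtain j where "j \<le> n - 1" "int (z j) = y"
    using lazy_walk_hits [of "n - 1" "\<lambda>j. int (z j)"] step_bound assms by (auto simp: step_def)
  then show ?thesis
    using n_pos by (intro exI [of _ j]) simp
qed

lemma last_step_bound: "\<bar>int (z n) - int (z (n - 1))\<bar> \<le> 1"
  using step_bound [of "n - 1"] n_pos by (simp add: step_def)

lemma no_forward_translation:
  assumes shift: "\<And>j. j < n \<Longrightarrow> int (z (j + n)) = int (z j) + int q" and "q > 0"
  shows False
proof -
  have "c (z 0 + k) = c (z 0 + q + k)" if k: "k < q" for k
  proof -
    have "int (z 0) + int k \<le> int (z (n - 1))"
      using last_step_bound shift [of 0] n_pos k by simp
    then obtain j where "j < n" "int (z j) = int (z 0) + int k"
      using first_half_hits [of "int (z 0) + int k"] by auto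
    then have "z j = z 0 + k" "z (j + n) = z 0 + q + k"
      using shift [of j] by simp_all
    then show ?thesis
      using square [OF \<open>j < n\<close>] by simp
  qed
  then show False
    using square_free \<open>q > 0\<close> unfolding nat_square_free_def by blast
qed

lemma no_backward_translation:
  assumes shift: "\<And>j. j < n \<Longrightarrow> int (z (j + n)) = int (z j) - int q" and "q > 0"
  shows False
proof -
  have hit: "\<exists>j<n. int (z j) = int (z 0) - int r" if "r < q" for r
    using first_half_hits [of "int (z 0) - int r"] last_step_bound shift [of 0] n_pos that by fastforce
  then obtain j0 where "j0 < n" "int (z j0) = int (z 0) - int (q - 1)"
    using \<open>q > 0\<close> by (meson diff_less zero_less_one)
  then have "2 * q \<le> z 0 + 1"
    using shift [of j0] \<open>q > 0\<close> by simp
  define a where "a = z 0 + 1 - 2 * q"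
  have "c (a + k) = c (a + q + k)" if k: "k < q" for k
  proof -
    obtain j where "j < n" "int (z j) = int (z 0) - int (q - 1 - k)"
      using hit [of "q - 1 - k"] k by auto
    moreover have "z (j + n) = a + k" "z j = a + q + k"
      using calculation shift [of j] k \<open>2 * q \<le> z 0 + 1\<close> by (simp_all add: a_def)
    ultimately show ?thesis
      using square [of j] by simp
  qed
  then show False
    using square_free \<open>q > 0\<close> unfolding nat_square_free_def by blast
qed

lemma no_translation:
  assumes "\<And>j. j < n \<Longrightarrow> int (z (j + n)) = int (z j) + d"
  shows "d = 0"
proof (rule ccontr)
  assume "d \<noteq> 0"
  then consider "d = int (nat d)" "nat d > 0" | "d = - int (nat (- d))" "nat (- d) > 0"
    by linarith
  then show False
    using no_forward_translation [of "nat d"] no_backward_translation [of "nat (- d)"] assms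
    by cases auto
qed

lemma reflection_fixes_start:
  assumes mirror: "\<And>j. j < n \<Longrightarrow> int (z (j + n)) = e - int (z j)"
  shows "z n = z 0"
proof (rule ccontr)
  assume "z n \<noteq> z 0"
  moreover have "e = int (z n) + int (z 0)"
    using mirror [of 0] n_pos by simp
  ultimately obtain y where y: "min (int (z 0)) (int (z (n - 1))) \<le> y"
    "y \<le> max (int (z 0)) (int (z (n - 1)))" "2 * y \<noteq> e" "\<bar>2 * y - e\<bar> \<le> 2"
    using int_near_half_between [of e "int (z 0)" "int (z (n - 1))"] last_step_bound by force
  then obtain j where j: "j < n" "int (z j) = y"
    using first_half_hits by blast
  then have "z j = z (j + n)"
    using eq_if_close [of j "j + n"] square [of j] mirror [of j] y(4) by simp
  then show False
    using mirror [of j] j y(3) by simp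
qed

theorem periodic:
  assumes "j < n"
  shows "z (j + n) = z j"
proof (cases "z n = z 0")
  case True
  then show ?thesis
    using periodic_if_start assms by blast
next
  case False
  obtain \<rho> :: int where \<rho>: "\<bar>\<rho>\<bar> = 1" "\<And>j. Suc j < n \<Longrightarrow> step (j + n) = \<rho> * step j"
    using orientation by metis
  have "\<rho> = 1 \<or> \<rho> = -1"
    using \<rho>(1) by auto
  then show ?thesis
  proof
    assume "\<rho> = 1"
    then have "int (z n) - int (z 0) = 0"
      using no_translation [of "int (z n) - int (z 0)"] shifted_walk [OF \<rho>(2)] by simp
    then show ?thesis
      using False by simp
  next
    assume "\<rho> = -1"
    then have "z n = z 0"
      using reflection_fixes_start [of "int (z n) + int (z 0)"] shifted_walk [OF \<rho>(2)] by simp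
    then show ?thesis
      using False by simp
  qed
qed

end

section \<open>Vertices, levels and indices\<close>

datatype vertex = Root int | Ear vertex vertex

fun level :: "vertex \<Rightarrow> nat" where
  "level (Root i) = 0"
| "level (Ear u v) = min (level u) (level v) + 1"

text \<open>A letter inserted between two letters of equal level has no neighbour of its own level in the
  sense of \<open>indices_consecutive\<close>, so its index is arbitrary.\<close>

fun index :: "vertex \<Rightarrow> int" where
  "index (Root i) = i"
| "index (Ear u v) =
     (if level u = level v then 0 else if level u < level v then index v - 1 else index u + 1)"

definition levels_lazy :: "(int \<Rightarrow> vertex) \<Rightarrow> bool" where
  "levels_lazy w \<longleftrightarrow> (\<forall>i. level (w (i + 1)) \<le> level (w i) + 1 \<and> level (w i) \<le> level (w (i + 1)) + 1)"

definition indices_consecutive :: "(int \<Rightarrow> vertex) \<Rightarrow> bool" where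
  "indices_consecutive w \<longleftrightarrow> (\<forall>i j. i < j \<longrightarrow> level (w i) = level (w j)
     \<longrightarrow> (\<forall>k. i < k \<longrightarrow> k < j \<longrightarrow> level (w i) < level (w k)) \<longrightarrow> index (w j) = index (w i) + 1)"

lemma indices_consecutiveD:
  "indices_consecutive w \<Longrightarrow> i < j \<Longrightarrow> level (w i) = level (w j)
    \<Longrightarrow> (\<And>k. i < k \<Longrightarrow> k < j \<Longrightarrow> level (w i) < level (w k)) \<Longrightarrow> index (w j) = index (w i) + 1"
  unfolding indices_consecutive_def by blast

definition grow :: "(int \<Rightarrow> vertex) \<Rightarrow> int \<Rightarrow> int \<Rightarrow> vertex" where
  "grow w p = extend w p (Ear (w p) (w (p + 1)))"

lemma levels_lazy_Root: "levels_lazy Root"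
  by (simp add: levels_lazy_def)

lemma indices_consecutive_Root: "indices_consecutive Root"
  unfolding indices_consecutive_def
proof (intro allI impI)
  fix i j :: int
  assume "i < j" and between: "\<forall>k. i < k \<longrightarrow> k < j \<longrightarrow> level (Root i) < level (Root k)"
  then have "j = i + 1"
    using between [rule_format, of "i + 1"] by fastforce
  then show "index (Root j) = index (Root i) + 1"
    by simp
qed

lemma extend_eq_shift: "i \<noteq> p + 1 \<Longrightarrow> extend w p x i = w (if i \<le> p then i else i - 1)"
  by (simp add: extend_def)

lemma extend_unshift: "extend w p x (if k \<le> p then k else k + 1) = w k"
  by (simp add: extend_def)

lemma grow_new: "grow w p (p + 1) = Ear (w p) (w (p + 1))"
  by (simp add: grow_def extend_def)

lemma grow_after_new: "grow w p (p + 2) = w (p + 1)"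
  by (simp add: grow_def extend_def add.commute)

lemma level_Ear_ge:
  assumes "levels_lazy w"
  shows "level (w p) \<le> level (Ear (w p) (w (p + 1)))" "level (w (p + 1)) \<le> level (Ear (w p) (w (p + 1)))"
  using assms by (auto simp: levels_lazy_def dest: spec [of _ p])

lemma levels_lazy_grow:
  assumes "levels_lazy w"
  shows "levels_lazy (grow w p)"
  unfolding levels_lazy_def
proof
  fix i
  have adj: "level (w (k + 1)) \<le> level (w k) + 1 \<and> level (w k) \<le> level (w (k + 1)) + 1" for k
    using assms by (simp add: levels_lazy_def)
  consider "i + 1 \<le> p" | "i = p" | "i = p + 1" | "p + 1 < i"
    by linarith
  then show "level (grow w p (i + 1)) \<le> level (grow w p i) + 1
      \<and> level (grow w p i) \<le> level (grow w p (i + 1)) + 1"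
  proof cases
    case 1
    then show ?thesis
      using adj [of i] by (simp add: grow_def extend_def)
  next
    case 2
    then show ?thesis
      using adj [of p] by (auto simp: grow_def extend_def)
  next
    case 3
    then show ?thesis
      using adj [of p] grow_new [of w p] grow_after_new [of w p] by (auto simp: add.assoc)
  next
    case 4
    then show ?thesis
      using adj [of "i - 1"] by (simp add: grow_def extend_def)
  qed
qed

text \<open>Away from the new letter, \<open>grow w p\<close> is \<open>w\<close> reindexed monotonically, with \<open>extend_unshift\<close>
  as inverse; so the condition for a pair of old letters transfers to \<open>w\<close>.\<close>

lemma grow_index_old:
  assumes "indices_consecutive w" "i < j" "i \<noteq> p + 1" "j \<noteq> p + 1"
    and "level (grow w p i) = level (grow w p j)"
    and between: "\<And>k. i < k \<Longrightarrow> k < j \<Longrightarrow> level (grow w p i) < level (grow w p k)"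
  shows "index (grow w p j) = index (grow w p i) + 1"
proof -
  define shift where "shift k = (if k \<le> p then k else k - 1)" for k
  define unshift where "unshift k = (if k \<le> p then k else k + 1)" for k :: int
  have old: "grow w p k = w (shift k)" if "k \<noteq> p + 1" for k
    using that by (simp add: grow_def shift_def extend_eq_shift)
  have "index (w (shift j)) = index (w (shift i)) + 1"
  proof (rule indices_consecutiveD [OF assms(1)])
    show "shift i < shift j"
      using assms(2-4) by (auto simp: shift_def)
    show "level (w (shift i)) = level (w (shift j))"
      using assms(3-5) old by simp
    fix k assume "shift i < k" "k < shift j"
    then have "i < unshift k" "unshift k < j"
      using assms(3,4) by (auto simp: shift_def unshift_def split: if_splits)
    then show "level (w (shift i)) < level (w k)"
      using between [of "unshift k"] old [OF assms(3)] extend_unshift [of w p _ k]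
      by (simp add: grow_def unshift_def)
  qed
  then show ?thesis
    using old assms(3,4) by simp
qed

lemma grow_index_new_right:
  assumes "levels_lazy w" "i < p + 1" "level (grow w p i) = level (grow w p (p + 1))"
    and between: "\<And>k. i < k \<Longrightarrow> k < p + 1 \<Longrightarrow> level (grow w p i) < level (grow w p k)"
  shows "index (grow w p (p + 1)) = index (grow w p i) + 1"
proof -
  have old: "grow w p k = w k" if "k \<le> p" for k
    using that by (simp add: grow_def extend_def)
  have "i = p"
  proof (rule ccontr)
    assume "i \<noteq> p"
    then have "level (w i) < level (w p)"
      using between [of p] assms(2) old by simp
    then show False
      using assms(2,3) old level_Ear_ge [OF assms(1), of p] grow_new [of w p] by simp
  qed
  then have "level (w (p + 1)) < level (w p)"
    using assms(1,3) old grow_new [of w p] by (auto simp: levels_lazy_def dest: spec [of _ p])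
  then show ?thesis
    using \<open>i = p\<close> old grow_new [of w p] by simp
qed

lemma grow_index_new_left:
  assumes "levels_lazy w" "p + 1 < j" "level (grow w p (p + 1)) = level (grow w p j)"
    and between: "\<And>k. p + 1 < k \<Longrightarrow> k < j \<Longrightarrow> level (grow w p (p + 1)) < level (grow w p k)"
  shows "index (grow w p j) = index (grow w p (p + 1)) + 1"
proof -
  have "j = p + 2"
  proof (rule ccontr)
    assume "j \<noteq> p + 2"
    then have "level (Ear (w p) (w (p + 1))) < level (w (p + 1))"
      using between [of "p + 2"] assms(2) grow_after_new [of w p] grow_new [of w p] by simp
    then show False
      using level_Ear_ge [OF assms(1), of p] by simp
  qed
  then have "level (w p) < level (w (p + 1))"
    using assms(1,3) grow_after_new [of w p] grow_new [of w p]
    by (auto simp: levels_lazy_def dest: spec [of _ p])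
  then show ?thesis
    using \<open>j = p + 2\<close> grow_after_new [of w p] grow_new [of w p] by simp
qed

lemma indices_consecutive_grow:
  assumes "levels_lazy w" "indices_consecutive w"
  shows "indices_consecutive (grow w p)"
  unfolding indices_consecutive_def
proof (intro allI impI)
  fix i j
  assume facts: "i < j" "level (grow w p i) = level (grow w p j)"
    "\<forall>k. i < k \<longrightarrow> k < j \<longrightarrow> level (grow w p i) < level (grow w p k)"
  show "index (grow w p j) = index (grow w p i) + 1"
  proof (cases "j = p + 1")
    case True
    then show ?thesis
      using facts grow_index_new_right [OF assms(1)] by fastforce
  next
    case False
    show ?thesis
    proof (cases "i = p + 1")
      case True
      then show ?thesis
        using facts grow_index_new_left [OF assms(1)] by fastforce
    qed (use False facts grow_index_old [OF assms(2)] in fastforce)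
  qed
qed

lemma index_count:
  assumes "indices_consecutive w" "u \<le> v" "level (w u) = m" "level (w v) = m"
    and "\<And>k. u \<le> k \<Longrightarrow> k \<le> v \<Longrightarrow> m \<le> level (w k)"
  shows "index (w v) = index (w u) + int (card {k. u \<le> k \<and> k < v \<and> level (w k) = m})"
  using assms(2-5)
proof (induction "nat (v - u)" arbitrary: v rule: less_induct)
  case less
  define S where "S = {k. u \<le> k \<and> k < v \<and> level (w k) = m}"
  show ?case
  proof (cases "u = v")
    case False
    have fin: "finite S"
      by (rule finite_subset [of _ "{u..<v}"]) (auto simp: S_def)
    define k0 where "k0 = Max S"
    have "u \<in> S"
      using less.prems False by (simp add: S_def)
    then have "k0 \<in> S"
      unfolding k0_def using fin by (intro Max_in) auto
    then have k0: "u \<le> k0" "k0 < v" "level (w k0) = m"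
      by (simp_all add: S_def)
    have above: "m < level (w k)" if "k0 < k" "k < v" for k
      using that k0 less.prems(4) [of k] Max_ge [OF fin, of k] unfolding k0_def S_def by fastforce
    have "index (w v) = index (w k0) + 1"
      using indices_consecutiveD [OF assms(1) k0(2)] k0(3) less.prems(3) above by simp
    moreover have "S = insert k0 {k. u \<le> k \<and> k < k0 \<and> level (w k) = m}"
      using k0 above by (auto simp: S_def) (metis linorder_neqE order_less_irrefl)
    moreover have "index (w k0) = index (w u) + int (card {k. u \<le> k \<and> k < k0 \<and> level (w k) = m})"
      using less.hyps [of k0] k0 less.prems by simp
    moreover have "finite {k. u \<le> k \<and> k < k0 \<and> level (w k) = m}"
      by (rule finite_subset [of _ "{u..<k0}"]) auto
    ultimately show ?thesis
      by (simp add: S_def [symmetric])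
  next
    case True
    then have "{k. u \<le> k \<and> k < v \<and> level (w k) = m} = {}"
      by auto
    then show ?thesis
      using True by (simp only: card.empty)
  qed
qed

text \<open>In a factor of length \<open>2 * n\<close> whose levels have period \<open>n\<close>, the index of a letter of
  minimal level is that of the first such letter plus its rank among them, and shifting by \<open>n\<close>
  adds the number of such letters in one period.\<close>

locale periodic_levels =
  fixes w :: "int \<Rightarrow> vertex" and i :: int and n :: nat
  assumes consecutive: "indices_consecutive w"
    and n_pos: "n > 0"
    and periodic: "\<And>k. i \<le> k \<Longrightarrow> k < i + int n \<Longrightarrow> level (w (k + int n)) = level (w k)"
begin

definition min_level :: nat where
  "min_level = Min ((\<lambda>k. level (w k)) ` {i..<i + int n})"

definition bottom :: "int set" where
  "bottom = {k. i \<le> k \<and> k < i + int n \<and> level (w k) = min_level}"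

definition first :: int where
  "first = Min bottom"

definition rank :: "int \<Rightarrow> nat" where
  "rank y = card {k. first \<le> k \<and> k < y \<and> level (w k) = min_level}"

lemma min_level_le:
  assumes "i \<le> k" "k < i + 2 * int n"
  shows "min_level \<le> level (w k)"
proof (cases "k < i + int n")
  case True
  then show ?thesis
    using assms(1) by (simp add: min_level_def)
next
  case False
  then have "level (w k) = level (w (k - int n))"
    using periodic [of "k - int n"] assms(2) by simp
  then show ?thesis
    using False assms(2) by (simp add: min_level_def)
qed

lemma finite_bottom: "finite bottom"
  by (rule finite_subset [of _ "{i..<i + int n}"]) (auto simp: bottom_def)

lemma bottom_nonempty: "bottom \<noteq> {}"
proof -
  have "min_level \<in> (\<lambda>k. level (w k)) ` {i..<i + int n}"
    unfolding min_level_def using n_pos by (intro Min_in) auto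
  then show ?thesis
    by (auto simp: bottom_def)
qed

lemma first_in_bottom: "first \<in> bottom"
  unfolding first_def using finite_bottom bottom_nonempty by (rule Min_in)

lemma first_le: "y \<in> bottom \<Longrightarrow> first \<le> y"
  unfolding first_def using finite_bottom by (rule Min_le)

lemma index_eq_rank:
  assumes "first \<le> y" "y < i + 2 * int n" "level (w y) = min_level"
  shows "index (w y) = index (w first) + int (rank y)"
  unfolding rank_def
proof (rule index_count [OF consecutive assms(1)])
  show "level (w first) = min_level"
    using first_in_bottom by (simp add: bottom_def)
  show "\<And>k. first \<le> k \<Longrightarrow> k \<le> y \<Longrightarrow> min_level \<le> level (w k)"
    using first_in_bottom assms(2) min_level_le by (simp add: bottom_def)
qed (rule assms(3))

lemma rank_shift:
  assumes "y \<in> bottom"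
  shows "rank (y + int n) = card bottom + rank y"
proof -
  define below where "below = {k. first \<le> k \<and> k < y \<and> level (w k) = min_level}"
  have y: "i \<le> y" "y < i + int n" "level (w y) = min_level"
    using assms by (simp_all add: bottom_def)
  have first: "i \<le> first" "first \<le> y"
    using first_in_bottom first_le [OF assms] by (simp_all add: bottom_def)
  have "{k. first \<le> k \<and> k < y + int n \<and> level (w k) = min_level}
      = bottom \<union> (\<lambda>k. k + int n) ` below"
  proof (intro set_eqI iffI)
    fix k assume k: "k \<in> {k. first \<le> k \<and> k < y + int n \<and> level (w k) = min_level}"
    show "k \<in> bottom \<union> (\<lambda>k. k + int n) ` below"
    proof (cases "k < i + int n")
      case True
      then show ?thesis
        using k first by (simp add: bottom_def)
    next
      case False
      then have "k - int n \<in> bottom"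
        using k y periodic [of "k - int n"] by (simp add: bottom_def)
      then have "k - int n \<in> below"
        using k first_le by (simp add: below_def bottom_def)
      then show ?thesis
        by (simp add: image_iff) (metis diff_add_cancel)
    qed
  next
    fix k assume "k \<in> bottom \<union> (\<lambda>k. k + int n) ` below"
    then show "k \<in> {k. first \<le> k \<and> k < y + int n \<and> level (w k) = min_level}"
      using first y periodic first_le by (auto simp: bottom_def below_def)
  qed
  moreover have "bottom \<inter> (\<lambda>k. k + int n) ` below = {}"
    using first by (auto simp: bottom_def below_def)
  moreover have "finite below"
    by (rule finite_subset [of _ "{first..<y}"]) (auto simp: below_def)
  ultimately show ?thesis
    using finite_bottom by (simp add: rank_def card_Un_disjoint card_image below_def [symmetric])
qed

lemma rank_bottom: "rank ` bottom = {..<card bottom}"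
proof (rule card_subset_eq)
  have smaller: "{k. first \<le> k \<and> k < y \<and> level (w k) = min_level} \<subset> bottom" if "y \<in> bottom" for y
    using that first_le first_in_bottom by (auto simp: bottom_def)
  have mono: "rank y < rank y'" if "y \<in> bottom" "y' \<in> bottom" "y < y'" for y y'
    unfolding rank_def
  proof (rule psubset_card_mono)
    show "finite {k. first \<le> k \<and> k < y' \<and> level (w k) = min_level}"
      by (rule finite_subset [of _ "{first..<y'}"]) auto
  qed (use that first_le in \<open>auto simp: bottom_def\<close>)
  show "rank ` bottom \<subseteq> {..<card bottom}"
    using smaller psubset_card_mono [OF finite_bottom] by (auto simp: rank_def)
  have "inj_on rank bottom"
    by (rule inj_onI) (metis mono linorder_neqE order_less_irrefl)
  then show "card (rank ` bottom) = card {..<card bottom}"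
    by (simp add: card_image)
qed simp

lemma index_shift:
  assumes "y \<in> bottom"
  shows "index (w y) = index (w first) + int (rank y)"
    and "index (w (y + int n)) = index (w first) + int (card bottom) + int (rank y)"
proof -
  have y: "i \<le> y" "y < i + int n" "level (w y) = min_level"
    using assms by (simp_all add: bottom_def)
  show "index (w y) = index (w first) + int (rank y)"
    using index_eq_rank [of y] first_le [OF assms] y by simp
  show "index (w (y + int n)) = index (w first) + int (card bottom) + int (rank y)"
    using index_eq_rank [of "y + int n"] first_le [OF assms] y periodic [of y] rank_shift [OF assms]
    by simp
qed

end

section \<open>The square-free colouring and the tree\<close>

definition colour :: "vertex \<Rightarrow> (bool \<times> bool) \<times> int" where
  "colour v = (quad_word (level v), thue_morse_diff (index v))"

lemma colour_square_level_periodic: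
  assumes "levels_lazy w" "n > 0"
    and sq: "\<And>j. j < n \<Longrightarrow> colour (w (i + int j)) = colour (w (i + int n + int j))"
    and "i \<le> k" "k < i + int n"
  shows "level (w (k + int n)) = level (w k)"
proof -
  define z where "z j = level (w (i + int j))" for j
  interpret lazy_walk_square quad_word z n
  proof
    show "nat_square_free quad_word"
      by (rule quad_word_square_free)
    show "quad_word a = quad_word b \<Longrightarrow> a \<le> b + 2 \<Longrightarrow> b \<le> a + 2 \<Longrightarrow> a = b" for a b
      by (rule quad_word_eq_near)
    show "z (Suc j) \<le> z j + 1 \<and> z j \<le> z (Suc j) + 1" for j
    proof -
      have "i + int (Suc j) = i + int j + 1"
        by simp
      then show ?thesis
        using assms(1) unfolding levels_lazy_def z_def by presburger
    qed
    show "j < n \<Longrightarrow> quad_word (z j) = quad_word (z (j + n))" for j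
      using sq [of j] by (simp add: z_def colour_def ac_simps)
  qed (use assms(2) in simp_all)
  have "z (nat (k - i) + n) = z (nat (k - i))"
    using periodic assms(4,5) by simp
  moreover have "i + int (nat (k - i) + n) = k + int n" "i + int (nat (k - i)) = k"
    using assms(4) by simp_all
  ultimately show ?thesis
    by (simp add: z_def)
qed

theorem colour_square_free:
  assumes "levels_lazy w" "indices_consecutive w"
  shows "square_free (\<lambda>i. colour (w i))"
  unfolding square_free_def
proof clarify
  fix i n
  assume "n > 0" and sq: "\<forall>j<n. colour (w (i + int j)) = colour (w (i + int n + int j))"
  interpret periodic_levels w i n
    using assms(2) \<open>n > 0\<close> colour_square_level_periodic [OF assms(1) \<open>n > 0\<close>] sq
    by unfold_locales auto
  define a where "a = index (w first)"
  define s where "s = card bottom"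
  have "thue_morse_diff (a + int r) = thue_morse_diff (a + int s + int r)" if "r < s" for r
  proof -
    obtain y where y: "y \<in> bottom" "rank y = r"
      using rank_bottom \<open>r < s\<close> unfolding s_def by (metis imageE lessThan_iff)
    then have "nat (y - i) < n" "i + int (nat (y - i)) = y"
      by (auto simp: bottom_def)
    then have "thue_morse_diff (index (w y)) = thue_morse_diff (index (w (y + int n)))"
      using sq by (force simp: colour_def ac_simps)
    then show ?thesis
      using index_shift [OF y(1)] y(2) by (simp add: a_def s_def)
  qed
  moreover have "s > 0"
    using finite_bottom bottom_nonempty by (simp add: s_def card_gt_0_iff)
  ultimately show False
    using thue_morse_diff_square_free unfolding square_free_def by blast
qed

primrec vertex_tree :: "int list \<Rightarrow> int \<Rightarrow> vertex" where
  "vertex_tree [] = Root"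
| "vertex_tree (p # ps) = grow (vertex_tree ps) p"

lemma vertex_tree_invariants: "levels_lazy (vertex_tree ps) \<and> indices_consecutive (vertex_tree ps)"
  by (induction ps)
    (simp_all add: levels_lazy_Root indices_consecutive_Root levels_lazy_grow indices_consecutive_grow)

lemma square_free_comp:
  assumes "square_free w" "inj_on f (range w)"
  shows "square_free (\<lambda>i. f (w i))"
  using assms unfolding square_free_def inj_on_def by (metis rangeI)

lemma extend_comp: "extend (\<lambda>i. f (w i)) p (f x) = (\<lambda>i. f (extend w p x i))"
  by (simp add: extend_def fun_eq_iff)

lemma complete_bifurcate_tree_encode:
  assumes sqf: "\<And>ps. square_free (W ps)"
    and child: "\<And>ps p. \<exists>x. W (p # ps) = extend (W ps) p x"
    and range: "\<And>ps i. W ps i \<in> C" and enc: "inj_on enc C" "enc ` C \<subseteq> A"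
  shows "complete_bifurcate_tree A (\<lambda>ps i. enc (W ps i))"
proof -
  have enc_sqf: "square_free (\<lambda>i. enc (W ps i))" for ps
    using sqf range by (blast intro: square_free_comp inj_on_subset [OF enc(1)])
  have enc_child: "\<exists>x\<in>A. (\<lambda>i. enc (W (p # ps) i)) = extend (\<lambda>i. enc (W ps i)) p x" for ps p
  proof -
    obtain x where x: "W (p # ps) = extend (W ps) p x"
      using child by blast
    then have "x \<in> C"
      using range [of "p # ps" "p + 1"] by (simp add: extend_def)
    then show ?thesis
      using x enc(2) by (intro bexI [of _ "enc x"]) (auto simp: extend_comp)
  qed
  show ?thesis
    unfolding complete_bifurcate_tree_def bifurcate_def word_over_def
    using enc_sqf enc_child range enc(2) by (metis image_subset_iff)
qed

theorem mainTheorem6: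
  fixes A :: "'a set"
  assumes "finite A" and "card A = 12"
  shows "\<exists>T. complete_bifurcate_tree A T"
proof -
  define C where "C = (UNIV :: (bool \<times> bool) set) \<times> {- 1, 0, 1 :: int}"
  have "card (UNIV :: (bool \<times> bool) set) = 4"
    by (simp only: UNIV_Times_UNIV [symmetric] card_cartesian_product card_UNIV_bool)
  then have "finite C" "card C = 12"
    by (simp_all add: C_def card_cartesian_product)
  then obtain enc where enc: "bij_betw enc C A"
    using finite_same_card_bij assms by metis
  have "complete_bifurcate_tree A (\<lambda>ps i. enc (colour (vertex_tree ps i)))"
  proof (rule complete_bifurcate_tree_encode [where W = "\<lambda>ps i. colour (vertex_tree ps i)" and C = C])
    show "square_free (\<lambda>i. colour (vertex_tree ps i))" for ps
      using vertex_tree_invariants colour_square_free by blast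
    show "\<exists>x. (\<lambda>i. colour (vertex_tree (p # ps) i)) = extend (\<lambda>i. colour (vertex_tree ps i)) p x" for ps p
      by (rule exI [of _ "colour (Ear (vertex_tree ps p) (vertex_tree ps (p + 1)))"])
        (simp add: grow_def extend_comp)
    show "colour (vertex_tree ps i) \<in> C" for ps i
      unfolding C_def colour_def using thue_morse_diff_range by blast
    show "inj_on enc C" "enc ` C \<subseteq> A"
      using enc by (simp_all add: bij_betw_def)
  qed
  then show ?thesis
    by blast
qed

end
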